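(* Let $\mathcal{C}_1$ be an $(n,k,d)$ code constructed from a $t$-design $(I_n,\mathcal{B})\in S_\lambda(n-d+1,r,n)$, achieving $(\bar\alpha,\bar M_1)$, and let $\mathcal{C}_2$ be the $(n,k,d)$ code constructed from the complete block design $S_{\lambda^*}(n-d+1,r,n)$, achieving $(\bar\alpha,\bar M_2)$. Then $\bar M_1\le\bar M_2$, with equality if and only if, in $(I_n,\mathcal{B})$, the quantity $T(A)$ is the same for all sets $A\subset I_n$ with $|A|=n-k$.
   Context: Exact-repair regenerating codes: $n$ disks each storing $\alpha$ symbols, any $k$ disks suffice to reconstruct $M$ information symbols, and a failed disk is repaired from $d$ helper disks; the normalized measures are $\bar\alpha=\alpha/\beta$ and $\bar M=M/\beta$, where $\beta$ is the per-helper repair amount (here the total repair bandwidth is $\gamma=d\beta$). Code construction from a $t$-design $(I_n,\mathcal{B})\in S_\lambda(t,r,n)$ with $t=n-d+1$ (blocks of size $r$, every $t$-subset of $I_n$ contained in exactly $\lambda$ blocks, $N_\lambda(t,r,n)=\lambda\binom{n}{t}\binom{r}{t}^{-1}$ blocks): for $A\subset I_n$ with $|A|=n-k$ let $T(A)=\sum_{B\in\mathcal{B}:|B\cap A|\ge t}(|B\cap A|-t+1)$ and $T=\max_{|A|=n-k}T(A)$. Information symbols (of number $M$) together with $T$ parity symbols of a first-layer linear code fill an $(r-t+1)\times N_\lambda(t,r,n)$ array; each column is extended by $t-1$ parity symbols of a fixed systematic $(r,r-t+1)$ MDS code to form a parity group of $r$ symbols, which are stored one per disk on the disks of the corresponding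 block. The parameters are $\alpha=\lambda\binom{n-1}{t-1}/\binom{r-1}{t-1}$, $\gamma=(r-t+1)\alpha$, $M=(r-t+1)N_\lambda(t,r,n)-T$. The complete block design $S_{\lambda^*}(t,r,n)$ takes all $r$-subsets of $I_n$ as blocks, with $\lambda^*=\binom{n-t}{r-t}$. *)

theory Defs
  imports Complex_Main "HOL-Library.Multiset"
begin

text \<open>A t-design S_lambda(t,r,n): a multiset of blocks (repeated
  blocks allowed), each an r-subset of I_n, such that every t-subset of I_n lies in exactly
  lambda blocks (counted with multiplicity).\<close>
definition is_t_design :: "nat \<Rightarrow> nat \<Rightarrow> nat \<Rightarrow> nat \<Rightarrow> nat set multiset \<Rightarrow> bool" where
  "is_t_design lam t r n B \<longleftrightarrow>
     (\<forall>b\<in>#B. b \<subseteq> {1..n} \<and> card b = r) \<and>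
     (\<forall>S. S \<subseteq> {1..n} \<and> card S = t \<longrightarrow> size {# b \<in># B. S \<subseteq> b #} = lam)"

definition complete_design :: "nat \<Rightarrow> nat \<Rightarrow> nat set multiset" where
  "complete_design n r = mset_set {b. b \<subseteq> {1..n} \<and> card b = r}"

definition TA :: "nat \<Rightarrow> nat set multiset \<Rightarrow> nat set \<Rightarrow> nat" where
  "TA t B A = (\<Sum>b\<in>#{# b \<in># B. t \<le> card (b \<inter> A) #}. card (b \<inter> A) - t + 1)"

definition Tmax :: "nat \<Rightarrow> nat \<Rightarrow> nat \<Rightarrow> nat set multiset \<Rightarrow> nat" where
  "Tmax n k t B = Max (TA t B ` {A. A \<subseteq> {1..n} \<and> card A = n - k})"

text \<open>Parameters of the code built from a design S_lambda(t,r,n) with t = n-d+1.\<close>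
definition num_blocks :: "nat \<Rightarrow> nat \<Rightarrow> nat \<Rightarrow> nat \<Rightarrow> real" where
  "num_blocks lam t r n = real lam * real (n choose t) / real (r choose t)"

definition code_alpha :: "nat \<Rightarrow> nat \<Rightarrow> nat \<Rightarrow> nat \<Rightarrow> real" where
  "code_alpha lam t r n = real lam * real ((n - 1) choose (t - 1)) / real ((r - 1) choose (t - 1))"

definition code_gamma :: "nat \<Rightarrow> nat \<Rightarrow> nat \<Rightarrow> nat \<Rightarrow> real" where
  "code_gamma lam t r n = real (r - t + 1) * code_alpha lam t r n"

text \<open>beta = gamma / d (per-helper repair amount).\<close>
definition code_beta :: "nat \<Rightarrow> nat \<Rightarrow> nat \<Rightarrow> nat \<Rightarrow> real" where
  "code_beta n d r lam = code_gamma lam (n - d + 1) r n / real d"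

definition code_M :: "nat \<Rightarrow> nat \<Rightarrow> nat \<Rightarrow> nat \<Rightarrow> nat \<Rightarrow> nat set multiset \<Rightarrow> real" where
  "code_M n k d r lam B =
     real (r - (n - d + 1) + 1) * num_blocks lam (n - d + 1) r n - real (Tmax n k (n - d + 1) B)"

definition code_alphabar :: "nat \<Rightarrow> nat \<Rightarrow> nat \<Rightarrow> nat \<Rightarrow> real" where
  "code_alphabar n d r lam = code_alpha lam (n - d + 1) r n / code_beta n d r lam"

definition code_Mbar :: "nat \<Rightarrow> nat \<Rightarrow> nat \<Rightarrow> nat \<Rightarrow> nat \<Rightarrow> nat set multiset \<Rightarrow> real" where
  "code_Mbar n k d r lam B = code_M n k d r lam B / code_beta n d r lam"

end

theory Submission
  imports Defs
begin

text \<open>Summed over all (n-k)-subsets A, every block contributes the same amount to T(A), by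
  symmetry under permutations of I_n, and a t-design has \<lambda> binom(n,t) / binom(r,t) blocks.
  Hence the average of T(A)/\<lambda> over A is the same for all designs S_\<lambda>(t,r,n). Their T/\<lambda>, a
  maximum, is at least this average, with equality iff T(A) is constant; for the complete design
  T(A) is constant by symmetry. Since Mbar = c (e - T/\<lambda>) with c > 0 and c, e independent of the
  design, the complete design maximises Mbar.\<close>

lemma ex_permutation_image_eq:
  assumes "finite U" "X \<subseteq> U" "Y \<subseteq> U" "card X = card Y"
  shows "\<exists>p. bij_betw p U U \<and> p ` X = Y"
proof -
  have fin: "finite X" "finite Y" using assms finite_subset by auto
  obtain f where f: "bij_betw f X Y" using finite_same_card_bij[OF fin assms(4)] by blast
  have "card (U - X) = card (U - Y)"
    using assms fin by (simp add: card_Diff_subset)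
  then obtain g where g: "bij_betw g (U - X) (U - Y)"
    using finite_same_card_bij[of "U - X" "U - Y"] assms by auto
  define p where "p x = (if x \<in> X then f x else g x)" for x
  have pX: "bij_betw p X Y"
    using f by (rule bij_betw_cong[THEN iffD1, rotated]) (simp add: p_def)
  have "bij_betw p (U - X) (U - Y)"
    using g by (rule bij_betw_cong[THEN iffD1, rotated]) (simp add: p_def)
  with pX have "bij_betw p (X \<union> (U - X)) (Y \<union> (U - Y))"
    by (rule bij_betw_combine) auto
  moreover have "X \<union> (U - X) = U" "Y \<union> (U - Y) = U" using assms by auto
  ultimately show ?thesis using pX by (auto simp: bij_betw_def)
qed

lemma sum_card_subsets_Int_invariant:
  assumes "finite U" "X \<subseteq> U" "Y \<subseteq> U" "card X = card Y"
  shows "(\<Sum>A | A \<subseteq> U \<and> card A = m. h (card (X \<inter> A)))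
       = (\<Sum>A | A \<subseteq> U \<and> card A = m. h (card (Y \<inter> A)))"
proof -
  let ?S = "{A. A \<subseteq> U \<and> card A = m}"
  obtain p where p: "bij_betw p U U" "p ` X = Y"
    using ex_permutation_image_eq[OF assms] by blast
  have inj: "inj_on p U" using p(1) by (rule bij_betw_imp_inj_on)
  have card_image_p: "card (p ` A) = card A" if "A \<subseteq> U" for A
    using inj_on_subset[OF inj that] by (rule card_image)
  have inj_image: "inj_on (image p) ?S"
    by (rule inj_on_subset[OF bij_betw_imp_inj_on[OF bij_betw_image_Pow[OF p(1)]]]) auto
  have "image p ` ?S \<subseteq> ?S"
    using bij_betw_imp_surj_on[OF p(1)] card_image_p by auto
  then have "image p ` ?S = ?S"
    using endo_inj_surj[OF _ _ inj_image] assms(1) by simp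
  with inj_image have bij: "bij_betw (image p) ?S ?S" by (simp add: bij_betw_def)
  have "card (Y \<inter> p ` A) = card (X \<inter> A)" if "A \<subseteq> U" for A
  proof -
    have "Y \<inter> p ` A = p ` (X \<inter> A)"
      using p(2) inj that assms(2) by (simp add: inj_on_image_Int)
    then show ?thesis using that card_image_p[of "X \<inter> A"] by auto
  qed
  then have "(\<Sum>A\<in>?S. h (card (X \<inter> A))) = (\<Sum>A\<in>?S. h (card (Y \<inter> p ` A)))"
    by (intro sum.cong) auto
  also have "\<dots> = (\<Sum>A\<in>?S. h (card (Y \<inter> A)))"
    by (rule sum.reindex_bij_betw[OF bij])
  finally show ?thesis .
qed

lemma card_subsets_containing:
  assumes "finite U" "S \<subseteq> U" "card S \<le> r"
  shows "card {b. b \<subseteq> U \<and> card b = r \<and> S \<subseteq> b} = (card U - card S) choose (r - card S)"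
proof -
  let ?L = "{b. b \<subseteq> U \<and> card b = r \<and> S \<subseteq> b}"
  let ?R = "{C. C \<subseteq> U - S \<and> card C = r - card S}"
  have finS: "finite S" using assms finite_subset by blast
  have "bij_betw (\<lambda>b. b - S) ?L ?R"
  proof (rule bij_betw_byWitness[where f' = "\<lambda>C. C \<union> S"])
    show "\<forall>b\<in>?L. b - S \<union> S = b" "\<forall>C\<in>?R. C \<union> S - S = C" by auto
    show "(\<lambda>b. b - S) ` ?L \<subseteq> ?R"
      using assms(1) by (auto simp: card_Diff_subset finS intro: finite_subset)
    show "(\<lambda>C. C \<union> S) ` ?R \<subseteq> ?L"
    proof safe
      fix C assume C: "C \<subseteq> U - S" "card C = r - card S"
      then have "finite C" using assms(1) finite_subset by blast
      moreover have "C \<inter> S = {}" using C by blast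
      ultimately have "card (C \<union> S) = card C + card S" by (simp add: card_Un_disjoint finS)
      with C assms(3) show "card (C \<union> S) = r" by simp
    qed (use assms in auto)
  qed
  then show ?thesis
    using n_subsets[of "U - S"] assms by (simp add: bij_betw_same_card card_Diff_subset finS)
qed

definition overlap_excess :: "nat \<Rightarrow> nat \<Rightarrow> nat" where
  "overlap_excess t j = (if t \<le> j then j - t + 1 else 0)"

lemma TA_eq_sum_overlap_excess: "TA t B A = (\<Sum>b\<in>#B. overlap_excess t (card (b \<inter> A)))"
  unfolding TA_def overlap_excess_def by (induction B) auto

lemma sum_mset_sum_swap:
  "(\<Sum>x\<in>#M. \<Sum>y\<in>S. f x y) = (\<Sum>y\<in>S. \<Sum>x\<in>#M. (f x y :: 'b::comm_monoid_add))"
  by (induction M) (auto simp: sum.distrib)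

lemma sum_TA_card_subsets:
  assumes "finite U" "R \<subseteq> U" "\<forall>b\<in>#B. b \<subseteq> U \<and> card b = card R"
  shows "(\<Sum>A | A \<subseteq> U \<and> card A = m. TA t B A)
       = size B * (\<Sum>A | A \<subseteq> U \<and> card A = m. overlap_excess t (card (R \<inter> A)))"
proof -
  let ?W = "\<lambda>b. \<Sum>A | A \<subseteq> U \<and> card A = m. overlap_excess t (card (b \<inter> A))"
  have "(\<Sum>A | A \<subseteq> U \<and> card A = m. TA t B A) = (\<Sum>b\<in>#B. ?W b)"
    unfolding TA_eq_sum_overlap_excess by (simp add: sum_mset_sum_swap)
  also have "\<dots> = (\<Sum>b\<in>#B. ?W R)"
    by (intro arg_cong[where f = sum_mset] image_mset_cong
        sum_card_subsets_Int_invariant[OF assms(1) _ assms(2)]) (use assms(3) in auto)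
  finally show ?thesis by simp
qed

lemma size_filter_mset_eq_sum_mset:
  "size (filter_mset P M) = (\<Sum>x\<in>#M. if P x then 1 else 0)"
  by (induction M) auto

lemma t_design_size:
  assumes "is_t_design lam t r n B"
  shows "size B * (r choose t) = lam * (n choose t)"
proof -
  let ?S = "{S. S \<subseteq> {1..n} \<and> card S = t}"
  have blocks: "\<forall>b\<in>#B. b \<subseteq> {1..n} \<and> card b = r"
    and covers: "\<And>S. S \<in> ?S \<Longrightarrow> size {# b \<in># B. S \<subseteq> b #} = lam"
    using assms unfolding is_t_design_def by auto
  have "(\<Sum>S\<in>?S. if S \<subseteq> b then 1 else 0) = r choose t" if "b \<in># B" for b
  proof -
    have "{S \<in> ?S. S \<subseteq> b} = {S. S \<subseteq> b \<and> card S = t}" using blocks that by auto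
    then have "card {S \<in> ?S. S \<subseteq> b} = r choose t"
      using blocks that n_subsets[of b t] finite_subset[of b "{1..n}"] by auto
    then show ?thesis by (simp add: sum.inter_filter[symmetric])
  qed
  then have "size B * (r choose t) = (\<Sum>b\<in>#B. \<Sum>S\<in>?S. if S \<subseteq> b then 1 else 0)"
    by (simp cong: image_mset_cong)
  also have "\<dots> = (\<Sum>S\<in>?S. size {# b \<in># B. S \<subseteq> b #})"
    by (simp only: sum_mset_sum_swap size_filter_mset_eq_sum_mset)
  also have "\<dots> = lam * (n choose t)"
    using covers n_subsets[of "{1..n}" t] by simp
  finally show ?thesis .
qed

lemma complete_design_is_t_design:
  assumes "t \<le> r"
  shows "is_t_design ((n - t) choose (r - t)) t r n (complete_design n r)"
proof -
  have "size {# b \<in># complete_design n r. S \<subseteq> b #} = (n - t) choose (r - t)"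
    if "S \<subseteq> {1..n}" "card S = t" for S
  proof -
    have "{b \<in> {b. b \<subseteq> {1..n} \<and> card b = r}. S \<subseteq> b}
            = {b. b \<subseteq> {1..n} \<and> card b = r \<and> S \<subseteq> b}"
      by auto
    then show ?thesis
      using card_subsets_containing[of "{1..n}" S r] that assms by (simp add: complete_design_def)
  qed
  then show ?thesis
    unfolding is_t_design_def by (auto simp: complete_design_def)
qed

lemma TA_complete_design_invariant:
  assumes "A \<subseteq> {1..n}" "A' \<subseteq> {1..n}" "card A = card A'"
  shows "TA t (complete_design n r) A = TA t (complete_design n r) A'"
  using sum_card_subsets_Int_invariant[OF _ assms, where m = r and h = "overlap_excess t"]
  unfolding TA_eq_sum_overlap_excess complete_design_def
  by (simp add: sum_unfold_sum_mset[symmetric] Int_commute)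

lemma card_Max_eq_sum_iff:
  fixes v :: "'a \<Rightarrow> nat"
  assumes "finite S" "S \<noteq> {}"
  shows "card S * Max (v ` S) = sum v S \<longleftrightarrow> (\<exists>c. \<forall>x\<in>S. v x = c)"
proof
  have le_Max: "\<forall>x\<in>S. v x \<le> Max (v ` S)" using assms by auto
  assume eq: "card S * Max (v ` S) = sum v S"
  show "\<exists>c. \<forall>x\<in>S. v x = c"
  proof (rule ccontr)
    assume "\<nexists>c. \<forall>x\<in>S. v x = c"
    with le_Max have "\<exists>x\<in>S. v x < Max (v ` S)" by (metis order_le_less)
    then have "sum v S < (\<Sum>_\<in>S. Max (v ` S))"
      using sum_strict_mono_ex1[OF assms(1) le_Max] by blast
    with eq show False by simp
  qed
next
  assume "\<exists>c. \<forall>x\<in>S. v x = c"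
  then obtain c where "\<forall>x\<in>S. v x = c" by blast
  moreover then have "v ` S = {c}" using assms(2) by auto
  ultimately show "card S * Max (v ` S) = sum v S" by simp
qed

text \<open>The average of T(A)/\<lambda> over the (n-k)-subsets A, for any S_\<lambda>(t,r,n) with \<lambda> > 0:
  there are \<lambda> binom(n,t) / binom(r,t) blocks, each contributing as much as the block {1..r}.\<close>
definition mean_TA_per_lambda :: "nat \<Rightarrow> nat \<Rightarrow> nat \<Rightarrow> nat \<Rightarrow> real" where
  "mean_TA_per_lambda n k t r =
     real (n choose t)
       * real (\<Sum>A | A \<subseteq> {1..n} \<and> card A = n - k. overlap_excess t (card ({1..r} \<inter> A)))
       / (real (r choose t) * real (n choose (n - k)))"

lemma t_design_Tmax_div_lambda:
  assumes "is_t_design lam t r n B" "0 < lam" "t \<le> r" "r \<le> n"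
  shows "mean_TA_per_lambda n k t r \<le> real (Tmax n k t B) / real lam"
    and "real (Tmax n k t B) / real lam = mean_TA_per_lambda n k t r
           \<longleftrightarrow> (\<exists>c. \<forall>A. A \<subseteq> {1..n} \<and> card A = n - k \<longrightarrow> TA t B A = c)"
proof -
  define AA where "AA = {A. A \<subseteq> {1..n} \<and> card A = n - k}"
  have finAA: "finite AA" and "{1..n - k} \<in> AA" unfolding AA_def by auto
  then have AA_nonempty: "AA \<noteq> {}" by blast
  have card_AA: "card AA = n choose (n - k)" unfolding AA_def using n_subsets[of "{1..n}"] by simp
  have Tmax_eq: "Tmax n k t B = Max (TA t B ` AA)" unfolding Tmax_def AA_def ..
  define W where "W = (\<Sum>A\<in>AA. overlap_excess t (card ({1..r} \<inter> A)))"
  have sum_TA: "(\<Sum>A\<in>AA. TA t B A) = size B * W"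
    unfolding AA_def W_def using assms(1,4)
    by (intro sum_TA_card_subsets) (auto simp: is_t_design_def)
  have "real (size B) * real (r choose t) = real lam * real (n choose t)"
    using t_design_size[OF assms(1)] by (metis of_nat_mult)
  moreover have "0 < real (r choose t)" using assms(3) by simp
  ultimately have "real (n choose t) / real (r choose t) = real (size B) / real lam"
    using assms(2) by (simp add: field_simps)
  moreover have "mean_TA_per_lambda n k t r
                  = real (n choose t) / real (r choose t) * real W / real (card AA)"
    unfolding mean_TA_per_lambda_def W_def card_AA by (simp add: AA_def del: of_nat_sum)
  ultimately have mean_eq:
    "mean_TA_per_lambda n k t r = real (\<Sum>A\<in>AA. TA t B A) / (real lam * real (card AA))"
    unfolding sum_TA by simp
  have Tmax_div_eq: "real (Tmax n k t B) / real lam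
                       = real (card AA * Tmax n k t B) / (real lam * real (card AA))"
    using finAA AA_nonempty by (simp add: card_gt_0_iff)
  have pos: "0 < real lam * real (card AA)"
    using assms(2) finAA AA_nonempty by (simp add: card_gt_0_iff)
  have "(\<Sum>A\<in>AA. TA t B A) \<le> card AA * Tmax n k t B"
    unfolding Tmax_eq by (rule sum_le_card_Max[OF finAA])
  then show "mean_TA_per_lambda n k t r \<le> real (Tmax n k t B) / real lam"
    unfolding mean_eq Tmax_div_eq using pos
    by (intro divide_right_mono) (simp_all only: of_nat_le_iff less_imp_le)
  have "card AA * Tmax n k t B = (\<Sum>A\<in>AA. TA t B A) \<longleftrightarrow> (\<exists>c. \<forall>A\<in>AA. TA t B A = c)"
    unfolding Tmax_eq by (rule card_Max_eq_sum_iff[OF finAA AA_nonempty])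
  also have "\<dots> \<longleftrightarrow> (\<exists>c. \<forall>A. A \<subseteq> {1..n} \<and> card A = n - k \<longrightarrow> TA t B A = c)"
    unfolding AA_def by simp
  finally show "real (Tmax n k t B) / real lam = mean_TA_per_lambda n k t r
          \<longleftrightarrow> (\<exists>c. \<forall>A. A \<subseteq> {1..n} \<and> card A = n - k \<longrightarrow> TA t B A = c)"
    unfolding mean_eq Tmax_div_eq using pos[THEN less_imp_neq, symmetric]
    by (simp only: divide_cancel_right of_nat_eq_iff simp_thms)
qed

lemma complete_design_Tmax_div_lambda:
  assumes "t \<le> r" "r \<le> n"
  shows "real (Tmax n k t (complete_design n r)) / real ((n - t) choose (r - t))
           = mean_TA_per_lambda n k t r"
proof -
  have "\<forall>A. A \<subseteq> {1..n} \<and> card A = n - k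
          \<longrightarrow> TA t (complete_design n r) A = TA t (complete_design n r) {1..n - k}"
    using TA_complete_design_invariant by auto
  moreover have "0 < (n - t) choose (r - t)" using assms by simp
  ultimately show ?thesis
    using t_design_Tmax_div_lambda(2)[OF complete_design_is_t_design[OF assms(1)] _ assms]
    by blast
qed

lemma code_Mbar_eq:
  assumes "0 < lam" "t = n - d + 1" "1 \<le> d" "t \<le> r"
  shows "code_Mbar n k d r lam B =
     real d * real ((r - 1) choose (t - 1)) / (real (r - t + 1) * real ((n - 1) choose (t - 1)))
     * (real (r - t + 1) * real (n choose t) / real (r choose t) - real (Tmax n k t B) / real lam)"
proof -
  have "0 < (r - 1) choose (t - 1)" "0 < (n - 1) choose (t - 1)" "0 < r choose t"
    using assms by simp_all
  then show ?thesis
    using assms unfolding code_Mbar_def code_M_def code_beta_def code_gamma_def code_alpha_def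
      num_blocks_def
    by (simp add: field_simps)
qed

lemma code_Mbar_compare:
  assumes "0 < lam" "0 < lam'" "t = n - d + 1" "1 \<le> d" "t \<le> r"
  shows "code_Mbar n k d r lam B \<le> code_Mbar n k d r lam' B'
           \<longleftrightarrow> real (Tmax n k t B') / real lam' \<le> real (Tmax n k t B) / real lam"
    and "code_Mbar n k d r lam B = code_Mbar n k d r lam' B'
           \<longleftrightarrow> real (Tmax n k t B) / real lam = real (Tmax n k t B') / real lam'"
proof -
  define c where
    "c = real d * real ((r - 1) choose (t - 1)) / (real (r - t + 1) * real ((n - 1) choose (t - 1)))"
  have "0 < c" unfolding c_def using assms(3-5) by simp
  then show "code_Mbar n k d r lam B \<le> code_Mbar n k d r lam' B'
           \<longleftrightarrow> real (Tmax n k t B') / real lam' \<le> real (Tmax n k t B) / real lam"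
    and "code_Mbar n k d r lam B = code_Mbar n k d r lam' B'
           \<longleftrightarrow> real (Tmax n k t B) / real lam = real (Tmax n k t B') / real lam'"
    unfolding code_Mbar_eq[OF assms(1,3-5)] code_Mbar_eq[OF assms(2,3-5)] c_def[symmetric]
    by simp_all
qed

theorem mainTheorem5:
  fixes n k d r lam :: nat and B :: "nat set multiset"
  assumes "1 \<le> k" and "k \<le> d" and "d < n"
    and "n - d + 1 \<le> r" and "r \<le> n"
    and "0 < lam"
    and "is_t_design lam (n - d + 1) r n B"
  shows "code_Mbar n k d r lam B
           \<le> code_Mbar n k d r ((n - (n - d + 1)) choose (r - (n - d + 1))) (complete_design n r)
       \<and> (code_Mbar n k d r lam B
            = code_Mbar n k d r ((n - (n - d + 1)) choose (r - (n - d + 1))) (complete_design n r)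
          \<longleftrightarrow> (\<exists>c. \<forall>A. A \<subseteq> {1..n} \<and> card A = n - k \<longrightarrow> TA (n - d + 1) B A = c))"
proof -
  define t where "t = n - d + 1"
  have tr: "t \<le> r" and rn: "r \<le> n" and d: "1 \<le> d" using assms unfolding t_def by simp_all
  have lam_complete: "0 < (n - t) choose (r - t)" using tr rn by simp
  note design = t_design_Tmax_div_lambda[OF assms(7)[folded t_def] assms(6) tr rn]
  note complete = complete_design_Tmax_div_lambda[OF tr rn]
  note compare = code_Mbar_compare[OF assms(6) lam_complete t_def d tr]
  show ?thesis
    unfolding t_def[symmetric] compare complete using design by auto
qed

end
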